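(* For every $n\ge 1$, $\min^-_{\omega+1}\not\le_{\mathrm{W}}\operatorname{BWT}_n$.
   Context: Represented spaces: a representation of a set $X$ is a partial surjection $\delta_X:\subseteq\mathbb{N}^\mathbb{N}\to X$. For a partial multi-valued function $f:\subseteq X\rightrightarrows Y$, a realizer is a partial $F:\subseteq\mathbb{N}^\mathbb{N}\to\mathbb{N}^\mathbb{N}$ with $\delta_Y(F(p))\in f(\delta_X(p))$ for all $p$ with $\delta_X(p)\in\mathrm{dom}(f)$. Weihrauch reducibility: $f\le_{\mathrm{W}} g$ iff there are computable partial $H:\subseteq\mathbb{N}^\mathbb{N}\times\mathbb{N}^\mathbb{N}\to\mathbb{N}^\mathbb{N}$ and $K:\subseteq\mathbb{N}^\mathbb{N}\to\mathbb{N}^\mathbb{N}$ such that $p\mapsto H(p,G(K(p)))$ is a realizer of $f$ for every realizer $G$ of $g$. $\omega+1:=\{-2^{-n}:n\in\mathbb{N}\}\cup\{0\}\subseteq\mathbb{R}$, a computable metric space with the Euclidean metric and dense set $\omega+1$ itself; points are represented by the Cauchy representation. Closed subsets of $\omega+1$ are represented negatively ($\mathcal{A}_-(\omega+1)$): a name of a closed $A$ is an enumeration of basic open balls $B(a,q)$ ($a\in\omega+1$, $q$ a nonnegative rational) whose union is $(\omega+1)\setminus A$. $\min^-_{\omega+1}:\subseteq\mathcal{A}_-(\omega+1)\to\omega+1$ maps each nonempty closed $A$ to $\min A$. For $n\ge1$, $\operatorname{BWT}_n:\subseteq\{0,\dots,n-1\}^\mathbb{N}\rightrightarrows\{0,\dots,n-1\}$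 (discrete space $\{0,\dots,n-1\}$) maps a sequence to the set of its cluster points, i.e. the values that occur infinitely often. *)

theory Defs
  imports Complex_Main "HOL-Library.Nat_Bijection"
begin

datatype recf = Zr | Sc | Pj nat | Cn recf "recf list" | Pr recf recf | Mn recf

inductive eval :: "recf \<Rightarrow> nat list \<Rightarrow> nat \<Rightarrow> bool" where
  eval_Zr: "eval Zr xs 0"
| eval_Sc: "eval Sc (x # xs) (Suc x)"
| eval_Pj: "i < length xs \<Longrightarrow> eval (Pj i) xs (xs ! i)"
| eval_Cn: "list_all2 (\<lambda>g y. eval g xs y) gs ys \<Longrightarrow> eval f ys z \<Longrightarrow> eval (Cn f gs) xs z"
| eval_Pr0: "eval f xs z \<Longrightarrow> eval (Pr f g) (0 # xs) z"
| eval_PrS: "eval (Pr f g) (n # xs) y \<Longrightarrow> eval g (y # n # xs) z \<Longrightarrow> eval (Pr f g) (Suc n # xs) z"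
| eval_Mn: "eval f (n # xs) 0 \<Longrightarrow> (\<forall>m<n. \<exists>y. eval f (m # xs) (Suc y)) \<Longrightarrow> eval (Mn f) xs n"

type_synonym baire = "nat \<Rightarrow> nat"

definition prefix_code :: "baire \<Rightarrow> nat \<Rightarrow> nat" where
  "prefix_code p k = list_encode (map p [0..<k])"

text \<open>A partial
  F :\<subseteq> baire \<rightarrow> baire is computable iff some e computes F p from p for all p in dom F.\<close>
definition computes :: "recf \<Rightarrow> baire \<Rightarrow> baire \<Rightarrow> bool" where
  "computes e p q \<longleftrightarrow>
     (\<forall>n. (\<exists>k. eval e [n, prefix_code p k] (q n)) \<and>
          (\<forall>k v. eval e [n, prefix_code p k] v \<longrightarrow> v = q n))"

definition pair_baire :: "baire \<Rightarrow> baire \<Rightarrow> baire" where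
  "pair_baire p q = (\<lambda>i. if even i then p (i div 2) else q (i div 2))"

text \<open>A representation is a partial map baire \<rightharpoonup> X (given as an option-valued function);
  a partial multi-valued function f :\<subseteq> X \<rightrightarrows> Y is given by f :: X \<Rightarrow> Y set with
  dom f = {x. f x \<noteq> {}}; realizers are partial maps baire \<rightharpoonup> baire.\<close>
definition realizer ::
  "(baire \<Rightarrow> 'a option) \<Rightarrow> (baire \<Rightarrow> 'b option) \<Rightarrow> ('a \<Rightarrow> 'b set) \<Rightarrow> (baire \<Rightarrow> baire option) \<Rightarrow> bool" where
  "realizer dX dY f F \<longleftrightarrow>
     (\<forall>p x. dX p = Some x \<and> f x \<noteq> {} \<longrightarrow> (\<exists>q y. F p = Some q \<and> dY q = Some y \<and> y \<in> f x))"

definition weihrauch_le ::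
  "(baire \<Rightarrow> 'a option) \<Rightarrow> (baire \<Rightarrow> 'b option) \<Rightarrow> ('a \<Rightarrow> 'b set) \<Rightarrow>
   (baire \<Rightarrow> 'c option) \<Rightarrow> (baire \<Rightarrow> 'd option) \<Rightarrow> ('c \<Rightarrow> 'd set) \<Rightarrow> bool" where
  "weihrauch_le dX dY f dU dV g \<longleftrightarrow>
     (\<exists>eH eK. \<forall>G. realizer dU dV g G \<longrightarrow>
        (\<forall>p x. dX p = Some x \<and> f x \<noteq> {} \<longrightarrow>
           (\<exists>q r s y. computes eK p q \<and> G q = Some r \<and> computes eH (pair_baire p r) s
                      \<and> dY s = Some y \<and> y \<in> f x)))"

definition omega1 :: "real set" where
  "omega1 = {- ((1/2) ^ n) | n. True} \<union> {0}"

text \<open>Numbering of the dense set omega+1 (= omega+1 itself).\<close>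
fun omega1_num :: "nat \<Rightarrow> real" where
  "omega1_num 0 = 0"
| "omega1_num (Suc n) = - ((1/2) ^ n)"

definition cauchy_rep :: "baire \<Rightarrow> real option" where
  "cauchy_rep p = (if (\<forall>i j. i \<le> j \<longrightarrow> \<bar>omega1_num (p i) - omega1_num (p j)\<bar> \<le> (1/2) ^ i)
                   then Some (lim (\<lambda>i. omega1_num (p i))) else None)"

definition radius_num :: "nat \<Rightarrow> real" where
  "radius_num k = (case prod_decode k of (a, b) \<Rightarrow> real a / real (Suc b))"

definition ball_code :: "nat \<Rightarrow> real set" where
  "ball_code k = (case prod_decode k of (a, r) \<Rightarrow>
      {x \<in> omega1. \<bar>x - omega1_num a\<bar> < radius_num r})"

definition closed_neg_rep :: "baire \<Rightarrow> real set option" where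
  "closed_neg_rep p = Some (omega1 - (\<Union>i. ball_code (p i)))"

text \<open>min^-_{omega+1}: defined exactly on nonempty closed sets, maps A to min A.\<close>
definition min_omega1 :: "real set \<Rightarrow> real set" where
  "min_omega1 A = {x. x \<in> A \<and> (\<forall>y\<in>A. x \<le> y)}"

definition seq_rep :: "nat \<Rightarrow> baire \<Rightarrow> baire option" where
  "seq_rep n p = (if \<forall>i. p i < n then Some p else None)"

definition fin_rep :: "nat \<Rightarrow> baire \<Rightarrow> nat option" where
  "fin_rep n q = (if q 0 < n then Some (q 0) else None)"

definition BWT :: "nat \<Rightarrow> baire \<Rightarrow> nat set" where
  "BWT n s = {k. k < n \<and> infinite {i. s i = k}}"

end

theory Submission
  imports Defs
begin

text \<open>Suppose \<open>min\<close> reduces to \<open>BWT\<^sub>n\<close> via a preprocessing machine \<open>K\<close> and a postprocessing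
  machine \<open>H\<close>. A realizer of \<open>BWT\<^sub>n\<close> may return any cluster point, so \<open>H\<close> must compute the
  minimum from every cluster point of the sequence produced by \<open>K\<close>. We build a name of a
  closed set in stages: at stage \<open>t\<close> it names \<open>\<omega>+1\<close> without its first \<open>t\<close> points, whose
  minimum is \<open>-(1/2)^t\<close>. For some cluster point \<open>k\<close>, the machine \<open>H\<close> reading the answer \<open>k\<close>
  approximates \<open>-(1/2)^t\<close> after a finite prefix of the name; removing that point beyond the
  prefix makes the approximation wrong forever, so the answer \<open>k\<close> is spoiled for all later
  stages. Each stage spoils a new answer in \<open>{0..n-1}\<close>, which is impossible \<open>n + 1\<close> times.\<close>

lemma half_power_dist_ge:
  assumes "i \<noteq> j"
  shows "(1/2::real) ^ Suc j \<le> \<bar>(1/2) ^ i - (1/2) ^ j\<bar>"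
proof (cases "i < j")
  case True
  then have "(1/2::real) ^ j \<le> (1/2) ^ Suc i" by (intro power_decreasing) auto
  moreover have "(0::real) < (1/2) ^ j" by simp
  ultimately show ?thesis unfolding power_Suc by linarith
next
  case False
  with assms have "(1/2::real) ^ i \<le> (1/2) ^ Suc j" by (intro power_decreasing) auto
  moreover have "(0::real) < (1/2) ^ i" by simp
  ultimately show ?thesis unfolding power_Suc by linarith
qed

lemma omega1_dist_ge:
  assumes "x \<in> omega1" "x \<noteq> - ((1/2) ^ j)"
  shows "(1/2::real) ^ Suc j \<le> \<bar>x + (1/2) ^ j\<bar>"
proof -
  from assms(1) consider i where "x = - ((1/2) ^ i)" | "x = 0"
    unfolding omega1_def by auto
  then show ?thesis
  proof cases
    case (1 i)
    with assms(2) have "i \<noteq> j" by auto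
    with 1 half_power_dist_ge[of i j] show ?thesis by (simp add: abs_minus_commute)
  qed simp
qed

text \<open>The ball around \<open>-(1/2)^j\<close> of radius \<open>(1/2)^(j+2)\<close>, which is below the distance
  \<open>(1/2)^(j+1)\<close> to the other points of \<open>\<omega>+1\<close>.\<close>
definition singleton_code :: "nat \<Rightarrow> nat" where
  "singleton_code j = prod_encode (Suc j, prod_encode (1, 2 ^ (j + 2) - 1))"

lemma ball_code_0: "ball_code 0 = {}"
proof -
  have "prod_decode 0 = (0, 0)"
    using prod_encode_inverse[of "(0, 0)"] by (simp add: prod_encode_def)
  then show ?thesis by (simp add: ball_code_def radius_num_def)
qed

lemma ball_code_singleton_code: "ball_code (singleton_code j) = {- ((1/2) ^ j)}"
proof -
  have "Suc (2 ^ (j + 2) - 1) = (2::nat) ^ (j + 2)" by simp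
  then have "real (Suc (2 ^ (j + 2) - 1)) = 2 ^ (j + 2)" by (metis of_nat_numeral of_nat_power)
  then have radius: "radius_num (prod_encode (1, 2 ^ (j + 2) - 1)) = (1/2) ^ (j + 2)"
    by (simp add: radius_num_def power_one_over)
  have "ball_code (singleton_code j) = {x \<in> omega1. \<bar>x - omega1_num (Suc j)\<bar> < (1/2) ^ (j + 2)}"
    by (simp only: ball_code_def singleton_code_def prod_encode_inverse prod.case radius)
  then have ball: "ball_code (singleton_code j) = {x \<in> omega1. \<bar>x + (1/2) ^ j\<bar> < (1/2) ^ (j + 2)}"
    by simp
  have only: "x = - ((1/2) ^ j)" if "x \<in> omega1" "\<bar>x + (1/2) ^ j\<bar> < (1/2) ^ (j + 2)" for x
  proof (rule ccontr)
    assume "x \<noteq> - ((1/2) ^ j)"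
    with \<open>x \<in> omega1\<close> have "(1/2) ^ Suc j \<le> \<bar>x + (1/2) ^ j\<bar>" by (rule omega1_dist_ge)
    moreover have "(1/2::real) ^ (j + 2) < (1/2) ^ Suc j" by (intro power_strict_decreasing) auto
    ultimately show False using that(2) by linarith
  qed
  have "- ((1/2::real) ^ j) \<in> omega1" unfolding omega1_def by auto
  then show ?thesis unfolding ball
  proof (intro set_eqI iffI)
    fix x assume "x \<in> {x \<in> omega1. \<bar>x + (1/2) ^ j\<bar> < (1/2) ^ (j + 2)}"
    with only show "x \<in> {- ((1/2) ^ j)}" by simp
  qed simp
qed

definition omega1_tail :: "nat \<Rightarrow> real set" where
  "omega1_tail t = omega1 - {- ((1/2) ^ j) | j. j < t}"

lemma min_omega1_tail: "min_omega1 (omega1_tail t) = {- ((1/2) ^ t)}"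
proof -
  have "(1/2::real) ^ t \<noteq> (1/2) ^ j" if "j < t" for j
    using half_power_dist_ge[of t j] that by auto
  then have min_in: "- ((1/2::real) ^ t) \<in> omega1_tail t"
    unfolding omega1_tail_def omega1_def by auto
  have "- ((1/2::real) ^ t) \<le> y" if "y \<in> omega1_tail t" for y
  proof -
    from that consider i where "y = - ((1/2) ^ i)" "t \<le> i" | "y = 0"
      unfolding omega1_tail_def omega1_def by (auto simp: not_less)
    then show ?thesis
    proof cases
      case (1 i)
      then show ?thesis by (simp add: power_decreasing)
    qed simp
  qed
  with min_in show ?thesis unfolding min_omega1_def by (auto intro: antisym)
qed

definition names_tail :: "baire \<Rightarrow> nat \<Rightarrow> nat \<Rightarrow> bool" where
  "names_tail P m t \<longleftrightarrow>
     (\<forall>i. P i = 0 \<or> (\<exists>j<t. P i = singleton_code j)) \<and> (\<forall>j<t. \<exists>i<m. P i = singleton_code j)"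

lemma closed_neg_rep_names_tail:
  assumes "names_tail P m t"
  shows "closed_neg_rep P = Some (omega1_tail t)"
proof -
  have "ball_code (P i) \<subseteq> {- ((1/2) ^ j) | j. j < t}" for i
  proof -
    from assms consider "P i = 0" | j where "j < t" "P i = singleton_code j"
      unfolding names_tail_def by meson
    then show ?thesis using ball_code_0 ball_code_singleton_code by cases auto
  qed
  moreover have "x \<in> (\<Union>i. ball_code (P i))" if "x \<in> {- ((1/2) ^ j) | j. j < t}" for x
  proof -
    from that obtain j where "j < t" "x = - ((1/2) ^ j)" by blast
    with assms obtain i where "P i = singleton_code j" unfolding names_tail_def by blast
    with \<open>x = - ((1/2) ^ j)\<close> have "x \<in> ball_code (P i)" by (simp add: ball_code_singleton_code)
    then show ?thesis by blast
  qed
  ultimately have "(\<Union>i. ball_code (P i)) = {- ((1/2) ^ j) | j. j < t}" by blast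
  then show ?thesis unfolding closed_neg_rep_def omega1_tail_def by simp
qed

lemma names_tail_update:
  assumes "names_tail P m t" "m \<le> m'"
  shows "names_tail (P(m' := singleton_code t)) (Suc m') (Suc t)"
  unfolding names_tail_def
proof (intro conjI allI impI)
  fix i
  show "(P(m' := singleton_code t)) i = 0 \<or> (\<exists>j<Suc t. (P(m' := singleton_code t)) i = singleton_code j)"
    using assms(1) unfolding names_tail_def by (cases "i = m'") (auto intro: less_SucI)
next
  fix j assume "j < Suc t"
  then consider "j = t" | "j < t" by linarith
  then show "\<exists>i<Suc m'. (P(m' := singleton_code t)) i = singleton_code j"
  proof cases
    case 2
    with assms(1) obtain i where "i < m" "P i = singleton_code j" unfolding names_tail_def by blast
    with assms(2) show ?thesis by (intro exI[of _ i]) auto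
  qed auto
qed

lemma cauchy_rep_dist_le:
  assumes "cauchy_rep s = Some y"
  shows "\<bar>omega1_num (s i) - y\<bar> \<le> (1/2) ^ i"
proof -
  define a where "a = (\<lambda>i. omega1_num (s i))"
  have fast: "\<bar>a i - a j\<bar> \<le> (1/2) ^ i" if "i \<le> j" for i j
    using assms that by (auto simp: cauchy_rep_def a_def split: if_splits)
  have y: "y = lim a"
    using assms by (auto simp: cauchy_rep_def a_def split: if_splits)
  have "Cauchy a"
  proof (rule metric_CauchyI)
    fix e :: real assume "0 < e"
    then obtain M where M: "(1/2::real) ^ M < e" using real_arch_pow_inv[of e "1/2"] by auto
    have "dist (a m) (a m') < e" if "M \<le> m" "M \<le> m'" for m m'
    proof -
      have "dist (a m) (a m') \<le> (1/2) ^ min m m'"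
        using fast[of m m'] fast[of m' m] by (cases "m \<le> m'") (auto simp: dist_real_def abs_minus_commute)
      also have "\<dots> \<le> (1/2) ^ M" using that by (intro power_decreasing) auto
      finally show ?thesis using M by linarith
    qed
    then show "\<exists>M. \<forall>m\<ge>M. \<forall>m'\<ge>M. dist (a m) (a m') < e" by blast
  qed
  then have "a \<longlonglongrightarrow> y" using y by (simp add: Cauchy_convergent_iff convergent_LIMSEQ_iff)
  then have "(\<lambda>j. \<bar>a i - a j\<bar>) \<longlonglongrightarrow> \<bar>a i - y\<bar>" by (intro tendsto_intros)
  moreover have "eventually (\<lambda>j. \<bar>a i - a j\<bar> \<le> (1/2) ^ i) sequentially"
    using fast by (auto simp: eventually_sequentially)
  ultimately have "\<bar>a i - y\<bar> \<le> (1/2) ^ i" by (rule tendsto_upperbound) simp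
  then show ?thesis by (simp add: a_def)
qed

lemma computes_eval_eq: "computes e p q \<Longrightarrow> eval e [n, prefix_code p k] v \<Longrightarrow> v = q n"
  unfolding computes_def by blast

lemma prefix_code_pair_baire_cong:
  assumes "\<forall>i<m. P' i = P i" "L \<le> m"
  shows "prefix_code (pair_baire P' r) L = prefix_code (pair_baire P r) L"
  unfolding prefix_code_def
proof (intro arg_cong[where f = list_encode] map_cong refl)
  fix i assume "i \<in> set [0..<L]"
  with assms show "pair_baire P' r i = pair_baire P r i" by (simp add: pair_baire_def)
qed

lemma BWT_nonempty:
  assumes "\<forall>i. q i < n"
  shows "BWT n q \<noteq> {}"
proof
  assume "BWT n q = {}"
  then have "\<forall>k<n. finite {i. q i = k}" by (auto simp: BWT_def)
  moreover have "(UNIV :: nat set) = (\<Union>k<n. {i. q i = k})" using assms by auto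
  ultimately show False by (metis finite_UN finite_lessThan infinite_UNIV_nat lessThan_iff)
qed

definition reduces_via ::
  "(baire \<Rightarrow> 'a option) \<Rightarrow> (baire \<Rightarrow> 'b option) \<Rightarrow> ('a \<Rightarrow> 'b set) \<Rightarrow>
   (baire \<Rightarrow> 'c option) \<Rightarrow> (baire \<Rightarrow> 'd option) \<Rightarrow> ('c \<Rightarrow> 'd set) \<Rightarrow> recf \<Rightarrow> recf \<Rightarrow> bool" where
  "reduces_via dX dY f dU dV g eH eK \<longleftrightarrow>
     (\<forall>G. realizer dU dV g G \<longrightarrow>
        (\<forall>p x. dX p = Some x \<and> f x \<noteq> {} \<longrightarrow>
           (\<exists>q r s y. computes eK p q \<and> G q = Some r \<and> computes eH (pair_baire p r) s
                      \<and> dY s = Some y \<and> y \<in> f x)))"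

lemma weihrauch_le_iff_reduces_via:
  "weihrauch_le dX dY f dU dV g \<longleftrightarrow> (\<exists>eH eK. reduces_via dX dY f dU dV g eH eK)"
  unfolding weihrauch_le_def reduces_via_def ..

text \<open>The realizer may choose a wrong cluster point whenever there is one; since it has to
  work for every realizer, all cluster points must be good answers.\<close>
lemma reduces_via_BWT_all_cluster_points:
  assumes red: "reduces_via dX dY f (seq_rep n) (fin_rep n) (BWT n) eH eK"
    and "dX p = Some x" "f x \<noteq> {}"
  shows "\<exists>q. computes eK p q \<and> (\<forall>i. q i < n) \<and>
           (\<forall>k\<in>BWT n q. \<exists>s y. computes eH (pair_baire p (\<lambda>_. k)) s \<and> dY s = Some y \<and> y \<in> f x)"
proof (rule ccontr)
  define good where "good k \<longleftrightarrow> (\<exists>s y. computes eH (pair_baire p (\<lambda>_. k)) s \<and> dY s = Some y \<and> y \<in> f x)"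
    for k
  assume "\<not> ?thesis"
  then have bad: "\<exists>k\<in>BWT n q. \<not> good k" if "computes eK p q" "\<forall>i. q i < n" for q
    using that unfolding good_def by blast
  define pick where "pick q = (if \<exists>k\<in>BWT n q. \<not> good k then SOME k. k \<in> BWT n q \<and> \<not> good k
                               else SOME k. k \<in> BWT n q)" for q
  define G :: "baire \<Rightarrow> baire option"
    where "G q = (if \<forall>i. q i < n then Some (\<lambda>_. pick q) else None)" for q
  have pick: "pick q \<in> BWT n q" if "BWT n q \<noteq> {}" for q
  proof (cases "\<exists>k\<in>BWT n q. \<not> good k")
    case True
    then have "\<exists>k. k \<in> BWT n q \<and> \<not> good k" by blast
    from someI_ex[OF this] True show ?thesis unfolding pick_def by simp
  next
    case False
    with that show ?thesis unfolding pick_def by (simp add: some_in_eq)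
  qed
  have "realizer (seq_rep n) (fin_rep n) (BWT n) G"
    unfolding realizer_def
  proof (intro allI impI)
    fix q x' assume "seq_rep n q = Some x' \<and> BWT n x' \<noteq> {}"
    then have "\<forall>i. q i < n" "x' = q" "BWT n q \<noteq> {}" by (auto simp: seq_rep_def split: if_splits)
    moreover from pick this(3) have "pick q < n" by (simp add: BWT_def)
    ultimately show "\<exists>r y. G q = Some r \<and> fin_rep n r = Some y \<and> y \<in> BWT n x'"
      using pick by (simp add: G_def fin_rep_def)
  qed
  with red assms(2,3) obtain q r s y where q: "computes eK p q" "G q = Some r"
    and s: "computes eH (pair_baire p r) s" "dY s = Some y" "y \<in> f x"
    unfolding reduces_via_def by blast
  from q(2) have valid: "\<forall>i. q i < n" and r: "r = (\<lambda>_. pick q)"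
    by (auto simp: G_def split: if_splits)
  from s r have "good (pick q)" unfolding good_def by blast
  moreover have "\<not> good (pick q)"
  proof -
    from bad[OF q(1) valid] have "\<exists>k. k \<in> BWT n q \<and> \<not> good k" by blast
    from someI_ex[OF this] show ?thesis unfolding pick_def by auto
  qed
  ultimately show False by contradiction
qed

text \<open>Reading the answer \<open>k\<close> and only a prefix of length at most \<open>m\<close> of \<open>P\<close>, the machine \<open>eH\<close>
  has committed to the point \<open>-(1/2)^j\<close>, which is removed from the set once \<open>j < t\<close>.\<close>
definition spoiled :: "recf \<Rightarrow> baire \<Rightarrow> nat \<Rightarrow> nat \<Rightarrow> nat \<Rightarrow> bool" where
  "spoiled eH P m t k \<longleftrightarrow>
     (\<exists>j<t. \<exists>L\<le>m. \<exists>v. eval eH [j + 3, prefix_code (pair_baire P (\<lambda>_. k)) L] v \<and>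
                     \<bar>omega1_num v + (1/2) ^ j\<bar> \<le> (1/2) ^ (j + 3))"

lemma spoiled_mono:
  assumes "spoiled eH P m t k" "\<forall>i<m. P' i = P i" "m \<le> m'" "t \<le> t'"
  shows "spoiled eH P' m' t' k"
proof -
  from assms(1) obtain j L v where "j < t" "L \<le> m"
    and eval: "eval eH [j + 3, prefix_code (pair_baire P (\<lambda>_. k)) L] v"
    and close: "\<bar>omega1_num v + (1/2) ^ j\<bar> \<le> (1/2) ^ (j + 3)"
    unfolding spoiled_def by blast
  from assms(2) \<open>L \<le> m\<close>
  have "prefix_code (pair_baire P' (\<lambda>_. k)) L = prefix_code (pair_baire P (\<lambda>_. k)) L"
    by (rule prefix_code_pair_baire_cong)
  with eval have "eval eH [j + 3, prefix_code (pair_baire P' (\<lambda>_. k)) L] v" by simp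
  moreover have "j < t'" "L \<le> m'" using \<open>j < t\<close> \<open>L \<le> m\<close> assms(3,4) by simp_all
  ultimately show ?thesis using close unfolding spoiled_def by blast
qed

lemma spoiled_of_limit:
  assumes "computes eH (pair_baire P (\<lambda>_. k)) s" "cauchy_rep s = Some (- ((1/2) ^ t))"
  shows "\<exists>L. spoiled eH P L (Suc t) k"
proof -
  from assms(1) obtain L where "eval eH [t + 3, prefix_code (pair_baire P (\<lambda>_. k)) L] (s (t + 3))"
    unfolding computes_def by blast
  moreover have "\<bar>omega1_num (s (t + 3)) + (1/2) ^ t\<bar> \<le> (1/2) ^ (t + 3)"
    using cauchy_rep_dist_le[OF assms(2)] by simp
  ultimately have "spoiled eH P L (Suc t) k"
    unfolding spoiled_def by (intro exI[of _ t]) blast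
  then show ?thesis ..
qed

text \<open>The committed approximation is within \<open>(1/2)^(j+2)\<close> of the limit, but \<open>-(1/2)^j\<close> is at
  distance at least \<open>(1/2)^(j+1)\<close> from \<open>-(1/2)^t\<close>.\<close>
lemma spoiled_limit_neq:
  assumes "spoiled eH P m t k" "computes eH (pair_baire P (\<lambda>_. k)) s" "cauchy_rep s = Some y"
  shows "y \<noteq> - ((1/2) ^ t)"
proof
  assume y: "y = - ((1/2) ^ t)"
  from assms(1) obtain j L v where "j < t"
    and v: "eval eH [j + 3, prefix_code (pair_baire P (\<lambda>_. k)) L] v"
    and close: "\<bar>omega1_num v + (1/2) ^ j\<bar> \<le> (1/2) ^ (j + 3)"
    unfolding spoiled_def by blast
  from computes_eval_eq[OF assms(2) v] have "\<bar>omega1_num v - y\<bar> \<le> (1/2) ^ (j + 3)"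
    using cauchy_rep_dist_le[OF assms(3)] by simp
  moreover have "(1/2::real) ^ Suc j \<le> \<bar>(1/2) ^ t - (1/2) ^ j\<bar>"
    using half_power_dist_ge[of t j] \<open>j < t\<close> by simp
  moreover have "(1/2::real) ^ (j + 3) = (1/2) ^ j / 8" "(1/2::real) ^ Suc j = (1/2) ^ j / 2"
    by (simp_all add: power_add power_numeral_reduce)
  moreover have "(0::real) < (1/2) ^ j" by simp
  ultimately show False using close y by arith
qed

lemma spoil_next_answer:
  assumes red: "reduces_via closed_neg_rep cauchy_rep min_omega1 (seq_rep n) (fin_rep n) (BWT n) eH eK"
    and tail: "names_tail P m t"
    and D: "\<forall>k\<in>D. spoiled eH P m t k" "D \<subseteq> {..<n}" "card D = t"
  shows "\<exists>P' m' D'. names_tail P' m' (Suc t) \<and> (\<forall>k\<in>D'. spoiled eH P' m' (Suc t) k) \<and>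
                    D' \<subseteq> {..<n} \<and> card D' = Suc t"
proof -
  obtain q where q: "\<forall>i. q i < n"
    and good: "\<forall>k\<in>BWT n q. \<exists>s y. computes eH (pair_baire P (\<lambda>_. k)) s \<and> cauchy_rep s = Some y
                                \<and> y \<in> min_omega1 (omega1_tail t)"
    using reduces_via_BWT_all_cluster_points[OF red closed_neg_rep_names_tail[OF tail]]
    by (auto simp: min_omega1_tail)
  from BWT_nonempty[OF q] obtain k where k: "k \<in> BWT n q" by blast
  with good obtain s where s: "computes eH (pair_baire P (\<lambda>_. k)) s"
    "cauchy_rep s = Some (- ((1/2) ^ t))"
    by (auto simp: min_omega1_tail)
  with D(1) spoiled_limit_neq have "k \<notin> D" by blast
  from spoiled_of_limit[OF s] obtain L where L: "spoiled eH P L (Suc t) k" by blast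
  define m' where "m' = max m L"
  define P' where "P' = P(m' := singleton_code t)"
  have agree: "\<forall>i<m'. P' i = P i" by (simp add: P'_def)
  have "names_tail P' (Suc m') (Suc t)"
    unfolding P'_def using tail by (rule names_tail_update) (simp add: m'_def)
  moreover have "\<forall>k'\<in>insert k D. spoiled eH P' (Suc m') (Suc t) k'"
    using spoiled_mono[OF L] spoiled_mono[of eH P m t] D(1) agree
    by (auto simp: m'_def)
  moreover have "insert k D \<subseteq> {..<n}" using k D(2) by (auto simp: BWT_def)
  moreover have "card (insert k D) = Suc t"
    using D(2,3) \<open>k \<notin> D\<close> finite_subset[OF D(2)] by simp
  ultimately show ?thesis by blast
qed

theorem proposition3p4:
  fixes n :: nat
  assumes "n \<ge> 1"
  shows "\<not> weihrauch_le closed_neg_rep cauchy_rep min_omega1 (seq_rep n) (fin_rep n) (BWT n)"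
proof
  assume "weihrauch_le closed_neg_rep cauchy_rep min_omega1 (seq_rep n) (fin_rep n) (BWT n)"
  then obtain eH eK
    where red: "reduces_via closed_neg_rep cauchy_rep min_omega1 (seq_rep n) (fin_rep n) (BWT n) eH eK"
    by (auto simp: weihrauch_le_iff_reduces_via)
  have "\<exists>P m D. names_tail P m t \<and> (\<forall>k\<in>D. spoiled eH P m t k) \<and> D \<subseteq> {..<n} \<and> card D = t"
    for t
  proof (induction t)
    case 0
    have "names_tail (\<lambda>_. 0) 0 0" by (simp add: names_tail_def)
    then show ?case by (intro exI[of _ "\<lambda>_. 0"] exI[of _ 0] exI[of _ "{}"]) simp
  next
    case (Suc t)
    then obtain P m D where "names_tail P m t" "\<forall>k\<in>D. spoiled eH P m t k" "D \<subseteq> {..<n}" "card D = t"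
      by blast
    then show ?case by (rule spoil_next_answer[OF red])
  qed
  then obtain D where "D \<subseteq> {..<n}" "card D = Suc n" by blast
  then show False using card_mono[of "{..<n}" D] by simp
qed

end
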